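(* Suppose $\lambda_1>0$ and $\beta$ satisfies condition $(E)$. Let $\varphi$ be an entire function and $C_\varphi f=f\circ\varphi$. Then $C_\varphi$ is a bounded operator from $\mathcal{H}(E,\beta)$ into itself if and only if $\varphi(z)=z+b$ for some $b\in\mathbb{C}$ with $\operatorname{Re}(b)\ge0$. Moreover, in that case the operator norm is $\|C_\varphi\|=e^{-\lambda_1\operatorname{Re}(b)}$.
   Context: Fix a sequence $\Lambda=(\lambda_n)_{n\ge1}$ of real numbers with $0\le\lambda_1<\lambda_2<\cdots$ and $\lambda_n\to+\infty$, such that $\limsup_{n\to\infty}\frac{\log n}{\lambda_n}<+\infty$. For a sequence $\beta=(\beta_n)$ of positive reals, condition $(E)$ is: $\liminf_{n\to\infty}\frac{\log\beta_n}{\lambda_n}=+\infty$. Under $(E)$, $\mathcal{H}(E,\beta)$ denotes the Hilbert space of entire functions $f(z)=\sum_{n=1}^\infty a_ne^{-\lambda_nz}$ ($a_n\in\mathbb{C}$; the representation is unique) with norm $\|f\|=\big(\sum_{n=1}^\infty|a_n|^2\beta_n^2\big)^{1/2}<\infty$. *)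

theory Defs
  imports "HOL-Analysis.Analysis"
begin

text \<open>Indexing convention: the paper's lambda_n, beta_n, a_n (n >= 1) are
  represented by lam (n-1), beta (n-1), a (n-1), i.e. sequences indexed from 0.\<close>

definition dirichlet_space :: "(nat \<Rightarrow> real) \<Rightarrow> (nat \<Rightarrow> real) \<Rightarrow> (complex \<Rightarrow> complex) set" where
  "dirichlet_space lam beta =
     {f. \<exists>a :: nat \<Rightarrow> complex.
           summable (\<lambda>n. (cmod (a n))\<^sup>2 * (beta n)\<^sup>2) \<and>
           (\<forall>z. (\<lambda>n. a n * exp (- of_real (lam n) * z)) sums f z)}"

definition dirichlet_coeffs :: "(nat \<Rightarrow> real) \<Rightarrow> (nat \<Rightarrow> real) \<Rightarrow> (complex \<Rightarrow> complex) \<Rightarrow> nat \<Rightarrow> complex" where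
  "dirichlet_coeffs lam beta f =
     (THE a. summable (\<lambda>n. (cmod (a n))\<^sup>2 * (beta n)\<^sup>2) \<and>
             (\<forall>z. (\<lambda>n. a n * exp (- of_real (lam n) * z)) sums f z))"

definition dirichlet_norm :: "(nat \<Rightarrow> real) \<Rightarrow> (nat \<Rightarrow> real) \<Rightarrow> (complex \<Rightarrow> complex) \<Rightarrow> real" where
  "dirichlet_norm lam beta f =
     sqrt (\<Sum>n. (cmod (dirichlet_coeffs lam beta f n))\<^sup>2 * (beta n)\<^sup>2)"

definition comp_bounded :: "(nat \<Rightarrow> real) \<Rightarrow> (nat \<Rightarrow> real) \<Rightarrow> (complex \<Rightarrow> complex) \<Rightarrow> bool" where
  "comp_bounded lam beta \<phi> \<longleftrightarrow>
     (\<forall>f \<in> dirichlet_space lam beta. f \<circ> \<phi> \<in> dirichlet_space lam beta) \<and>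
     (\<exists>M. \<forall>f \<in> dirichlet_space lam beta.
            dirichlet_norm lam beta (f \<circ> \<phi>) \<le> M * dirichlet_norm lam beta f)"

definition comp_opnorm :: "(nat \<Rightarrow> real) \<Rightarrow> (nat \<Rightarrow> real) \<Rightarrow> (complex \<Rightarrow> complex) \<Rightarrow> real" where
  "comp_opnorm lam beta \<phi> =
     Sup {dirichlet_norm lam beta (f \<circ> \<phi>) | f. f \<in> dirichlet_space lam beta \<and>
                                              dirichlet_norm lam beta f \<le> 1}"

end

theory Submission
  imports Defs "HOL-Complex_Analysis.Cauchy_Integral_Formula"
begin

text \<open>Condition (E) makes \<open>\<Sum>n. exp (t * lam n) / (beta n)\<^sup>2\<close> finite for every real t, so
  point evaluations are bounded and the space has reproducing kernels K_w with
  K_w(w) = ||K_w||^2 = \<open>\<Sum>n. exp (-2 Re w * lam n) / (beta n)\<^sup>2\<close>. If C_phi is bounded by M,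
  testing it on K_(phi z) gives ||K_(phi z)|| <= M ||K_z||; since ||K_w||^2 grows at least like
  exp (2 lam_1 (Re z - Re w)) ||K_z||^2 when Re w <= Re z, this bounds Re (phi z - z) from below,
  and Liouville's theorem forces phi z = z + b. Testing on exp (- lam_n z) then gives Re b >= 0.
  Conversely, translation by b multiplies the n-th coefficient by exp (- lam_n b), of modulus at
  most exp (- lam_1 Re b), with equality for the first exponential.\<close>

lemma summable_exp_mult_lam_div_beta_sq:
  fixes lam beta :: "nat \<Rightarrow> real"
  assumes lam_pos: "\<And>n. 0 < lam n" and beta_pos: "\<And>n. 0 < beta n"
    and lam_log: "limsup (\<lambda>n. ereal (ln (real (Suc n)) / lam n)) < \<infinity>"
    and condE: "liminf (\<lambda>n. ereal (ln (beta n) / lam n)) = \<infinity>"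
  shows "summable (\<lambda>n. exp (t * lam n) / (beta n)\<^sup>2)"
proof -
  obtain C where C: "limsup (\<lambda>n. ereal (ln (real (Suc n)) / lam n)) < ereal C"
    using ereal_dense2[OF lam_log] by blast
  define D where "D = max C 1"
  define A where "A = (t + 2 * D) / 2"
  have ev_log: "eventually (\<lambda>n. ln (real (Suc n)) / lam n < C) sequentially"
    using Limsup_lessD[OF C] by simp
  have "ereal A < liminf (\<lambda>n. ereal (ln (beta n) / lam n))"
    using condE by simp
  from less_LiminfD[OF this] have ev_beta: "eventually (\<lambda>n. A < ln (beta n) / lam n) sequentially"
    by simp
  have "eventually (\<lambda>n. norm (exp (t * lam n) / (beta n)\<^sup>2) \<le> inverse (real n ^ 2)) sequentially"
    using ev_log ev_beta eventually_gt_at_top[of "0::nat"]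
  proof eventually_elim
    case (elim n)
    have l: "0 < lam n" and b: "0 < beta n" by (fact lam_pos beta_pos)+
    have log_le: "ln (real (Suc n)) < D * lam n"
      using elim(1) l unfolding D_def
      by (smt (verit, ccfv_SIG) divide_less_eq mult_right_mono max.cobounded1)
    have "exp (A * lam n) < beta n"
      using elim(2) l b by (metis exp_less_cancel_iff exp_ln pos_less_divide_eq)
    then have "exp (A * lam n) ^ 2 < (beta n)\<^sup>2"
      by (intro power_strict_mono) auto
    then have beta_ge: "exp (2 * (A * lam n)) < (beta n)\<^sup>2"
      by (simp add: exp_double)
    have "exp (t * lam n) / (beta n)\<^sup>2 \<le> exp (t * lam n) / exp (2 * (A * lam n))"
      using beta_ge b by (intro divide_left_mono) auto
    also have "\<dots> = exp (- (2 * D * lam n))"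
      by (simp add: A_def exp_diff[symmetric] algebra_simps)
    also have "\<dots> \<le> exp (- (2 * ln (real (Suc n))))"
      using log_le by simp
    also have "\<dots> = inverse (exp (ln (real (Suc n))) ^ 2)"
      by (subst exp_of_nat_mult[symmetric]) (simp add: exp_minus)
    also have "\<dots> = inverse (real (Suc n) ^ 2)"
      by (simp only: exp_ln of_nat_0_less_iff zero_less_Suc)
    also have "\<dots> \<le> inverse (real n ^ 2)"
      using elim(3) by (intro le_imp_inverse_le power_mono) auto
    finally show ?case by simp
  qed
  then show ?thesis
    by (rule summable_comparison_test_ev[OF _ inverse_power_summable[of 2]]) simp
qed

lemma
  fixes p q :: "nat \<Rightarrow> real"
  assumes "\<And>n. 0 \<le> p n" "\<And>n. 0 \<le> q n"
    and p_sq: "summable (\<lambda>n. (p n)\<^sup>2)" and q_sq: "summable (\<lambda>n. (q n)\<^sup>2)"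
  shows summable_mult_of_sq: "summable (\<lambda>n. p n * q n)"
    and suminf_mult_le_sqrt: "(\<Sum>n. p n * q n) \<le> sqrt (\<Sum>n. (p n)\<^sup>2) * sqrt (\<Sum>n. (q n)\<^sup>2)"
proof -
  have "norm (p n * q n) \<le> ((p n)\<^sup>2 + (q n)\<^sup>2) / 2" for n
    using sum_squares_bound[of "p n" "q n"] assms by (simp add: power2_eq_square)
  then show pq: "summable (\<lambda>n. p n * q n)"
    by (rule summable_comparison_test'[OF summable_divide[OF summable_add[OF p_sq q_sq]]])
  show "(\<Sum>n. p n * q n) \<le> sqrt (\<Sum>n. (p n)\<^sup>2) * sqrt (\<Sum>n. (q n)\<^sup>2)"
  proof (rule suminf_le_const[OF pq])
    fix N
    have "(\<Sum>n<N. p n * q n)\<^sup>2 \<le> (\<Sum>n<N. (p n)\<^sup>2) * (\<Sum>n<N. (q n)\<^sup>2)"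
      by (rule Cauchy_Schwarz_ineq_sum)
    also have "\<dots> \<le> (\<Sum>n. (p n)\<^sup>2) * (\<Sum>n. (q n)\<^sup>2)"
      using p_sq q_sq by (intro mult_mono sum_le_suminf sum_nonneg suminf_nonneg) auto
    finally show "(\<Sum>n<N. p n * q n) \<le> sqrt (\<Sum>n. (p n)\<^sup>2) * sqrt (\<Sum>n. (q n)\<^sup>2)"
      by (simp add: real_le_rsqrt flip: real_sqrt_mult)
  qed
qed

lemma entire_Re_bounded_below_constant:
  assumes hol: "g holomorphic_on UNIV" and lower: "\<And>z. C \<le> Re (g z)"
  shows "g z = g 0"
proof -
  define h where "h = (\<lambda>z. 1 / (g z - of_real C + 1))"
  have Re_ge: "1 \<le> Re (g z - of_real C + 1)" for z
    using lower[of z] by simp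
  then have nz: "g z - of_real C + 1 \<noteq> 0" for z
    by (metis zero_complex.sel(1) not_one_le_zero)
  have "h holomorphic_on UNIV"
    unfolding h_def using nz by (intro holomorphic_intros hol) auto
  moreover have "cmod (h z) \<le> 1" for z
    using Re_ge[of z] complex_Re_le_cmod[of "g z - of_real C + 1"]
    by (simp add: h_def norm_divide divide_le_eq_1)
  then have "bounded (range h)"
    unfolding bounded_iff by blast
  ultimately obtain c where "\<And>z. h z = c"
    using Liouville_theorem unfolding constant_on_def by blast
  then have "h z = h 0"
    by simp
  then show ?thesis
    using nz[of z] nz[of 0] by (simp add: h_def)
qed

lemma dirichlet_series_tail_le:
  fixes lam :: "nat \<Rightarrow> real" and d :: "nat \<Rightarrow> complex"
  assumes mono: "strict_mono lam" and abs_summ: "summable (\<lambda>n. cmod (d n))" and "0 \<le> t"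
  shows "cmod (\<Sum>i. d (i + k) * exp (- of_real (lam (i + k)) * of_real t))
           \<le> (\<Sum>i. cmod (d (i + k))) * exp (- lam k * t)"
proof -
  have tail_summ: "summable (\<lambda>i. cmod (d (i + k)))"
    using abs_summ by (rule summable_ignore_initial_segment)
  have term_le: "norm (d (i + k) * exp (- of_real (lam (i + k)) * of_real t))
                   \<le> cmod (d (i + k)) * exp (- lam k * t)" for i
  proof -
    have "lam k \<le> lam (i + k)"
      using mono by (simp add: strict_mono_less_eq)
    then have "exp (- lam (i + k) * t) \<le> exp (- lam k * t)"
      using \<open>0 \<le> t\<close> by (simp add: mult_right_mono)
    then show ?thesis
      by (simp add: norm_mult norm_exp_eq_Re mult_left_mono)
  qed
  have bound_summ: "summable (\<lambda>i. cmod (d (i + k)) * exp (- lam k * t))"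
    using tail_summ by (rule summable_mult2)
  have norm_summ: "summable (\<lambda>i. norm (d (i + k) * exp (- of_real (lam (i + k)) * of_real t)))"
    by (rule summable_comparison_test[OF _ bound_summ]) (use term_le in auto)
  have "cmod (\<Sum>i. d (i + k) * exp (- of_real (lam (i + k)) * of_real t))
          \<le> (\<Sum>i. norm (d (i + k) * exp (- of_real (lam (i + k)) * of_real t)))"
    by (rule summable_norm[OF norm_summ])
  also have "\<dots> \<le> (\<Sum>i. cmod (d (i + k)) * exp (- lam k * t))"
    by (rule suminf_le[OF term_le norm_summ bound_summ])
  also have "\<dots> = (\<Sum>i. cmod (d (i + k))) * exp (- lam k * t)"
    using tail_summ by (rule suminf_mult2[symmetric])
  finally show ?thesis .
qed

lemma dirichlet_series_coeffs_zero:
  fixes lam :: "nat \<Rightarrow> real" and d :: "nat \<Rightarrow> complex"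
  assumes mono: "strict_mono lam" and abs_summ: "summable (\<lambda>n. cmod (d n))"
    and vanish: "\<And>t. 0 \<le> t \<Longrightarrow> (\<lambda>n. d n * exp (- of_real (lam n) * of_real t)) sums 0"
  shows "d m = 0"
proof (induction m rule: less_induct)
  case (less m)
  define A where "A = (\<Sum>i. cmod (d (i + Suc m)))"
  define \<delta> where "\<delta> = lam (Suc m) - lam m"
  have "0 < \<delta>"
    using mono by (simp add: \<delta>_def strict_mono_def)
  have bound: "cmod (d m) \<le> A * exp (- \<delta> * t)" if "0 \<le> t" for t
  proof -
    define g where "g n = d n * exp (- of_real (lam n) * of_real t)" for n
    have "(\<lambda>i. g (i + Suc m)) sums (0 - sum g {..<Suc m})"
      using vanish[OF that] unfolding g_def by (rule sums_split_initial_segment)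
    moreover have "sum g {..<Suc m} = g m"
      using less by (simp add: g_def)
    ultimately have "g m = - (\<Sum>i. g (i + Suc m))"
      by (simp add: sums_iff)
    then have "cmod (g m) = cmod (\<Sum>i. g (i + Suc m))"
      by simp
    also have "\<dots> \<le> A * exp (- lam (Suc m) * t)"
      using dirichlet_series_tail_le[OF mono abs_summ that, of "Suc m"] by (simp add: g_def A_def)
    finally have "cmod (d m) * exp (- lam m * t) \<le> A * exp (- lam (Suc m) * t)"
      by (simp add: g_def norm_mult norm_exp_eq_Re)
    then show ?thesis
      by (simp add: \<delta>_def pos_le_divide_eq exp_diff exp_minus field_simps)
  qed
  have "((\<lambda>t. A * exp (- \<delta> * t)) \<longlongrightarrow> 0) at_top"
    using \<open>0 < \<delta>\<close>
    by (intro tendsto_mult_right_zero filterlim_compose[OF exp_at_bot]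
        filterlim_tendsto_neg_mult_at_bot[OF tendsto_const] filterlim_ident) auto
  then have "cmod (d m) \<le> 0"
    by (rule tendsto_lowerbound) (use bound in \<open>auto intro: eventually_at_top_linorderI\<close>)
  then show ?case
    by simp
qed

locale dirichlet_space_setting =
  fixes lam beta :: "nat \<Rightarrow> real"
  assumes lam_mono: "strict_mono lam" and lam0_pos: "0 < lam 0"
    and beta_pos: "\<And>n. 0 < beta n"
    and kernel_summable: "\<And>t. summable (\<lambda>n. exp (t * lam n) / (beta n)\<^sup>2)"
begin

definition coeff_weight :: "(nat \<Rightarrow> complex) \<Rightarrow> nat \<Rightarrow> real" where
  "coeff_weight a = (\<lambda>n. (cmod (a n))\<^sup>2 * (beta n)\<^sup>2)"

definition expansion :: "(nat \<Rightarrow> complex) \<Rightarrow> (complex \<Rightarrow> complex) \<Rightarrow> bool" where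
  "expansion a f \<longleftrightarrow> summable (coeff_weight a) \<and>
     (\<forall>z. (\<lambda>n. a n * exp (- of_real (lam n) * z)) sums f z)"

text \<open>The squared norm of the reproducing kernel at any w with Re w = -t/2.\<close>
definition kernel_sum :: "real \<Rightarrow> real" where
  "kernel_sum t = (\<Sum>n. exp (t * lam n) / (beta n)\<^sup>2)"

lemma lam_le: "m \<le> n \<Longrightarrow> lam m \<le> lam n"
  using lam_mono strict_mono_less_eq by blast

lemma coeff_weight_nonneg: "0 \<le> coeff_weight a n"
  by (simp add: coeff_weight_def)

lemma kernel_sum_pos: "0 < kernel_sum t"
  unfolding kernel_sum_def
proof (intro suminf_pos kernel_summable)
  show "0 < exp (t * lam n) / (beta n)\<^sup>2" for n
    using beta_pos[of n] by simp
qed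

lemma kernel_sum_shift:
  assumes "0 \<le> s"
  shows "exp (s * lam 0) * kernel_sum t \<le> kernel_sum (t + s)"
proof -
  have "exp (s * lam 0) * (exp (t * lam n) / (beta n)\<^sup>2) \<le> exp ((t + s) * lam n) / (beta n)\<^sup>2" for n
  proof -
    have "s * lam 0 + t * lam n \<le> (t + s) * lam n"
      using lam_le[of 0 n] assms by (simp add: mult_left_mono distrib_right)
    then have "exp (s * lam 0) * exp (t * lam n) \<le> exp ((t + s) * lam n)"
      by (simp flip: exp_add)
    then show ?thesis
      by (simp add: divide_right_mono)
  qed
  then show ?thesis
    unfolding kernel_sum_def
    by (subst suminf_mult[OF kernel_summable, symmetric])
       (intro suminf_le summable_mult kernel_summable)
qed

lemma
  assumes "summable (coeff_weight a)"
  shows summable_coeff_exp: "summable (\<lambda>n. cmod (a n) * exp (- x * lam n))"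
    and suminf_coeff_exp_le:
      "(\<Sum>n. cmod (a n) * exp (- x * lam n))
         \<le> sqrt (suminf (coeff_weight a)) * sqrt (kernel_sum (-2 * x))"
proof -
  define p where "p n = cmod (a n) * beta n" for n
  define q where "q n = exp (- x * lam n) / beta n" for n
  have pq: "cmod (a n) * exp (- x * lam n) = p n * q n" for n
    using beta_pos[of n] by (simp add: p_def q_def)
  have p_sq: "(\<lambda>n. (p n)\<^sup>2) = coeff_weight a"
    by (simp add: fun_eq_iff p_def coeff_weight_def power_mult_distrib)
  have q_sq: "(\<lambda>n. (q n)\<^sup>2) = (\<lambda>n. exp ((-2 * x) * lam n) / (beta n)\<^sup>2)"
    by (simp add: fun_eq_iff q_def power_divide flip: exp_of_nat_mult)
  have nonneg: "0 \<le> p n" "0 \<le> q n" for n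
    using beta_pos[of n] by (simp_all add: p_def q_def)
  have p_summ: "summable (\<lambda>n. (p n)\<^sup>2)" and q_summ: "summable (\<lambda>n. (q n)\<^sup>2)"
    using assms kernel_summable by (simp_all only: p_sq q_sq)
  show "summable (\<lambda>n. cmod (a n) * exp (- x * lam n))"
    unfolding pq by (rule summable_mult_of_sq[OF nonneg p_summ q_summ])
  show "(\<Sum>n. cmod (a n) * exp (- x * lam n))
          \<le> sqrt (suminf (coeff_weight a)) * sqrt (kernel_sum (-2 * x))"
    using suminf_mult_le_sqrt[OF nonneg p_summ q_summ]
    unfolding pq p_sq q_sq kernel_sum_def .
qed

lemma expansion_norm_le:
  assumes "expansion a f"
  shows "cmod (f z) \<le> sqrt (suminf (coeff_weight a)) * sqrt (kernel_sum (-2 * Re z))"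
proof -
  have summ: "summable (coeff_weight a)"
    and f_sums: "(\<lambda>n. a n * exp (- of_real (lam n) * z)) sums f z"
    using assms by (auto simp: expansion_def)
  have norm_term: "norm (a n * exp (- of_real (lam n) * z)) = cmod (a n) * exp (- Re z * lam n)" for n
    by (simp add: norm_mult mult.commute)
  have "cmod (f z) = cmod (\<Sum>n. a n * exp (- of_real (lam n) * z))"
    using f_sums by (simp add: sums_iff)
  also have "\<dots> \<le> (\<Sum>n. norm (a n * exp (- of_real (lam n) * z)))"
    by (rule summable_norm) (unfold norm_term, rule summable_coeff_exp[OF summ])
  also have "\<dots> = (\<Sum>n. cmod (a n) * exp (- Re z * lam n))"
    by (simp only: norm_term)
  also have "\<dots> \<le> sqrt (suminf (coeff_weight a)) * sqrt (kernel_sum (-2 * Re z))"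
    by (rule suminf_coeff_exp_le[OF summ])
  finally show ?thesis .
qed

lemma expansion_unique:
  assumes "expansion a f" "expansion a' f"
  shows "a = a'"
proof
  fix m
  define d where "d n = a n - a' n" for n
  have summ: "summable (coeff_weight a)" "summable (coeff_weight a')"
    using assms by (auto simp: expansion_def)
  have "summable (\<lambda>n. cmod (a n) + cmod (a' n))"
    using summable_coeff_exp[OF summ(1), of 0] summable_coeff_exp[OF summ(2), of 0]
    by (simp add: summable_add)
  then have abs_summ: "summable (\<lambda>n. cmod (d n))"
    by (rule summable_comparison_test[rotated]) (auto simp: d_def norm_triangle_ineq4)
  have "(\<lambda>n. a n * exp (- of_real (lam n) * of_real t) - a' n * exp (- of_real (lam n) * of_real t))
          sums (f t - f t)" for t :: real
    using assms unfolding expansion_def by (intro sums_diff) auto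
  then have "(\<lambda>n. d n * exp (- of_real (lam n) * of_real t)) sums 0" for t :: real
    by (simp add: d_def left_diff_distrib)
  then have "d m = 0"
    using dirichlet_series_coeffs_zero[OF lam_mono abs_summ] by simp
  then show "a m = a' m"
    by (simp add: d_def)
qed

lemma dirichlet_space_iff: "f \<in> dirichlet_space lam beta \<longleftrightarrow> (\<exists>a. expansion a f)"
  by (simp add: dirichlet_space_def expansion_def coeff_weight_def)

lemma dirichlet_coeffs_eq: "expansion a f \<Longrightarrow> dirichlet_coeffs lam beta f = a"
  unfolding dirichlet_coeffs_def
  by (rule the_equality) (use expansion_unique in \<open>auto simp: expansion_def coeff_weight_def\<close>)

lemma dirichlet_norm_eq: "expansion a f \<Longrightarrow> dirichlet_norm lam beta f = sqrt (suminf (coeff_weight a))"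
  by (simp add: dirichlet_norm_def dirichlet_coeffs_eq coeff_weight_def)

lemma dirichlet_eval_le:
  assumes "f \<in> dirichlet_space lam beta"
  shows "cmod (f z) \<le> dirichlet_norm lam beta f * sqrt (kernel_sum (-2 * Re z))"
  using assms expansion_norm_le dirichlet_norm_eq by (auto simp: dirichlet_space_iff)

lemma expansion_monomial:
  "expansion (\<lambda>n. if n = k then c else 0) (\<lambda>z. c * exp (- of_real (lam k) * z))"
proof -
  have "coeff_weight (\<lambda>n. if n = k then c else 0) = (\<lambda>n. if n = k then coeff_weight (\<lambda>_. c) k else 0)"
    by (auto simp: coeff_weight_def)
  then have "coeff_weight (\<lambda>n. if n = k then c else 0) sums coeff_weight (\<lambda>_. c) k"
    using sums_single[of k "\<lambda>_. coeff_weight (\<lambda>_. c) k"] by simp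
  moreover have "(\<lambda>n. (if n = k then c else 0) * exp (- of_real (lam n) * z)) sums
                   (c * exp (- of_real (lam k) * z))" for z
  proof -
    have "(\<lambda>n. (if n = k then c else 0) * exp (- of_real (lam n) * z))
            = (\<lambda>n. if n = k then c * exp (- of_real (lam n) * z) else 0)"
      by auto
    then show ?thesis
      using sums_single[of k "\<lambda>n. c * exp (- of_real (lam n) * z)"] by simp
  qed
  ultimately show ?thesis
    by (auto simp: expansion_def sums_iff)
qed

lemma dirichlet_norm_monomial:
  "dirichlet_norm lam beta (\<lambda>z. c * exp (- of_real (lam k) * z)) = cmod c * beta k"
proof -
  have "coeff_weight (\<lambda>n. if n = k then c else 0) = (\<lambda>n. if n = k then (cmod c * beta k)\<^sup>2 else 0)"
    by (auto simp: coeff_weight_def power_mult_distrib)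
  then have "suminf (coeff_weight (\<lambda>n. if n = k then c else 0)) = (cmod c * beta k)\<^sup>2"
    using sums_single[of k "\<lambda>_. (cmod c * beta k)\<^sup>2"] by (simp add: sums_iff)
  then show ?thesis
    using dirichlet_norm_eq[OF expansion_monomial] beta_pos[of k] by simp
qed

definition kernel :: "complex \<Rightarrow> complex \<Rightarrow> complex" where
  "kernel w z = (\<Sum>n. exp (- of_real (lam n) * (cnj w + z)) / of_real ((beta n)\<^sup>2))"

lemma expansion_kernel:
  "expansion (\<lambda>n. exp (- of_real (lam n) * cnj w) / of_real ((beta n)\<^sup>2)) (kernel w)"
  and suminf_coeff_weight_kernel:
  "suminf (coeff_weight (\<lambda>n. exp (- of_real (lam n) * cnj w) / of_real ((beta n)\<^sup>2)))
     = kernel_sum (-2 * Re w)"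
proof -
  define c where "c = (\<lambda>n. exp (- of_real (lam n) * cnj w) / of_real ((beta n)\<^sup>2))"
  have term_eq: "c n * exp (- of_real (lam n) * z) = exp (- of_real (lam n) * (cnj w + z)) / of_real ((beta n)\<^sup>2)"
    for n z by (simp add: c_def algebra_simps flip: exp_add)
  have norm_term: "norm (c n * exp (- of_real (lam n) * z)) = exp ((- (Re w + Re z)) * lam n) / (beta n)\<^sup>2"
    for n z by (simp only: term_eq) (simp add: norm_divide norm_power algebra_simps)
  have weight: "coeff_weight c = (\<lambda>n. exp ((-2 * Re w) * lam n) / (beta n)\<^sup>2)"
  proof
    fix n
    have "coeff_weight c n = (exp (- Re w * lam n) / (beta n)\<^sup>2)\<^sup>2 * (beta n)\<^sup>2"
      by (simp add: coeff_weight_def c_def norm_divide norm_power)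
    also have "\<dots> = exp ((-2 * Re w) * lam n) / (beta n)\<^sup>2"
      using beta_pos[of n] by (simp add: power2_eq_square field_simps flip: exp_add)
    finally show "coeff_weight c n = exp ((-2 * Re w) * lam n) / (beta n)\<^sup>2" .
  qed
  have "(\<lambda>n. c n * exp (- of_real (lam n) * z)) sums kernel w z" for z
  proof -
    have "summable (\<lambda>n. norm (c n * exp (- of_real (lam n) * z)))"
      unfolding norm_term by (rule kernel_summable)
    then show ?thesis
      unfolding kernel_def term_eq[symmetric] by (rule summable_sums[OF summable_norm_cancel])
  qed
  then have "expansion c (kernel w)"
    unfolding expansion_def weight using kernel_summable by blast
  then show "expansion (\<lambda>n. exp (- of_real (lam n) * cnj w) / of_real ((beta n)\<^sup>2)) (kernel w)"
    by (simp only: c_def)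
  show "suminf (coeff_weight (\<lambda>n. exp (- of_real (lam n) * cnj w) / of_real ((beta n)\<^sup>2)))
          = kernel_sum (-2 * Re w)"
    using weight by (simp only: c_def kernel_sum_def)
qed

lemma dirichlet_norm_kernel: "dirichlet_norm lam beta (kernel w) = sqrt (kernel_sum (-2 * Re w))"
  unfolding dirichlet_norm_eq[OF expansion_kernel] suminf_coeff_weight_kernel ..

lemma kernel_diag: "kernel w w = of_real (kernel_sum (-2 * Re w))"
proof -
  have "cnj w + w = of_real (2 * Re w)"
    by (simp add: complex_eq_iff)
  then have "kernel w w = (\<Sum>n. of_real (exp ((-2 * Re w) * lam n) / (beta n)\<^sup>2))"
    by (simp add: kernel_def mult.commute flip: exp_of_real)
  also have "\<dots> = of_real (kernel_sum (-2 * Re w))"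
    unfolding kernel_sum_def by (rule suminf_of_real[OF kernel_summable, symmetric])
  finally show ?thesis .
qed

lemma
  assumes f: "expansion a f" and b: "0 \<le> Re b"
  shows expansion_translate: "expansion (\<lambda>n. exp (- of_real (lam n) * b) * a n) (f \<circ> (\<lambda>z. z + b))"
    and suminf_coeff_weight_translate_le:
      "suminf (coeff_weight (\<lambda>n. exp (- of_real (lam n) * b) * a n))
         \<le> (exp (- lam 0 * Re b))\<^sup>2 * suminf (coeff_weight a)"
proof -
  have summ: "summable (coeff_weight a)"
    using f by (simp add: expansion_def)
  have weight_le: "coeff_weight (\<lambda>n. exp (- of_real (lam n) * b) * a n) n
                     \<le> (exp (- lam 0 * Re b))\<^sup>2 * coeff_weight a n" for n
  proof -
    have "exp (- lam n * Re b) \<le> exp (- lam 0 * Re b)"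
      using lam_le[of 0 n] b by (simp add: mult_right_mono)
    then have "(exp (- lam n * Re b))\<^sup>2 \<le> (exp (- lam 0 * Re b))\<^sup>2"
      by (simp add: power_mono)
    then show ?thesis
      by (simp add: coeff_weight_def norm_mult power_mult_distrib mult_right_mono mult.assoc)
  qed
  have summ': "summable (coeff_weight (\<lambda>n. exp (- of_real (lam n) * b) * a n))"
    by (rule summable_comparison_test[OF _ summable_mult[OF summ]])
       (use weight_le in \<open>auto simp: coeff_weight_nonneg\<close>)
  show "suminf (coeff_weight (\<lambda>n. exp (- of_real (lam n) * b) * a n))
          \<le> (exp (- lam 0 * Re b))\<^sup>2 * suminf (coeff_weight a)"
    using suminf_le[OF weight_le summ' summable_mult[OF summ]] suminf_mult[OF summ] by simp
  have "(\<lambda>n. exp (- of_real (lam n) * b) * a n * exp (- of_real (lam n) * z))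
          = (\<lambda>n. a n * exp (- of_real (lam n) * (z + b)))" for z
    by (simp add: fun_eq_iff algebra_simps flip: exp_add)
  then have "(\<lambda>n. exp (- of_real (lam n) * b) * a n * exp (- of_real (lam n) * z)) sums f (z + b)" for z
    using f unfolding expansion_def by simp
  then show "expansion (\<lambda>n. exp (- of_real (lam n) * b) * a n) (f \<circ> (\<lambda>z. z + b))"
    using summ' by (simp add: expansion_def)
qed

lemma
  assumes f: "f \<in> dirichlet_space lam beta" and b: "0 \<le> Re b"
  shows translate_in_dirichlet_space: "f \<circ> (\<lambda>z. z + b) \<in> dirichlet_space lam beta"
    and dirichlet_norm_translate_le:
      "dirichlet_norm lam beta (f \<circ> (\<lambda>z. z + b)) \<le> exp (- lam 0 * Re b) * dirichlet_norm lam beta f"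
proof -
  obtain a where a: "expansion a f"
    using f by (auto simp: dirichlet_space_iff)
  note translate = expansion_translate[OF a b] suminf_coeff_weight_translate_le[OF a b]
  show "f \<circ> (\<lambda>z. z + b) \<in> dirichlet_space lam beta"
    using translate(1) by (auto simp: dirichlet_space_iff)
  have "dirichlet_norm lam beta (f \<circ> (\<lambda>z. z + b))
          \<le> sqrt ((exp (- lam 0 * Re b))\<^sup>2 * suminf (coeff_weight a))"
    using translate by (simp add: dirichlet_norm_eq)
  also have "\<dots> = exp (- lam 0 * Re b) * dirichlet_norm lam beta f"
    by (simp add: dirichlet_norm_eq[OF a] real_sqrt_mult)
  finally show "dirichlet_norm lam beta (f \<circ> (\<lambda>z. z + b)) \<le> exp (- lam 0 * Re b) * dirichlet_norm lam beta f" .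
qed

lemma dirichlet_norm_translate_monomial:
  "dirichlet_norm lam beta ((\<lambda>z. c * exp (- of_real (lam k) * z)) \<circ> (\<lambda>z. z + b))
     = exp (- lam k * Re b) * cmod c * beta k"
proof -
  have translate: "(\<lambda>z. c * exp (- of_real (lam k) * z)) \<circ> (\<lambda>z. z + b)
                     = (\<lambda>z. (c * exp (- of_real (lam k) * b)) * exp (- of_real (lam k) * z))"
    by (auto simp: algebra_simps simp flip: exp_add)
  show ?thesis
    unfolding translate dirichlet_norm_monomial by (simp add: norm_mult)
qed

lemma comp_bounded_translation:
  "0 \<le> Re b \<Longrightarrow> comp_bounded lam beta (\<lambda>z. z + b)"
  unfolding comp_bounded_def
  using translate_in_dirichlet_space dirichlet_norm_translate_le by blast

lemma comp_opnorm_translation: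
  assumes b: "0 \<le> Re b"
  shows "comp_opnorm lam beta (\<lambda>z. z + b) = exp (- lam 0 * Re b)"
  unfolding comp_opnorm_def
proof (rule cSup_eq_maximum)
  define e0 :: "complex \<Rightarrow> complex" where "e0 = (\<lambda>z. of_real (1 / beta 0) * exp (- of_real (lam 0) * z))"
  have "e0 \<in> dirichlet_space lam beta"
    unfolding e0_def dirichlet_space_iff using expansion_monomial by blast
  moreover have "dirichlet_norm lam beta e0 = 1"
    unfolding e0_def dirichlet_norm_monomial using beta_pos[of 0] by (simp add: norm_divide)
  moreover have "dirichlet_norm lam beta (e0 \<circ> (\<lambda>z. z + b)) = exp (- lam 0 * Re b)"
    using beta_pos[of 0] unfolding e0_def dirichlet_norm_translate_monomial by (simp add: norm_divide)
  ultimately show "exp (- lam 0 * Re b) \<in> {dirichlet_norm lam beta (f \<circ> (\<lambda>z. z + b)) |f.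
                     f \<in> dirichlet_space lam beta \<and> dirichlet_norm lam beta f \<le> 1}"
    by force
next
  fix x
  assume "x \<in> {dirichlet_norm lam beta (f \<circ> (\<lambda>z. z + b)) |f.
                 f \<in> dirichlet_space lam beta \<and> dirichlet_norm lam beta f \<le> 1}"
  then obtain f where f: "f \<in> dirichlet_space lam beta" "dirichlet_norm lam beta f \<le> 1"
    and x: "x = dirichlet_norm lam beta (f \<circ> (\<lambda>z. z + b))"
    by blast
  have "x \<le> exp (- lam 0 * Re b) * dirichlet_norm lam beta f"
    unfolding x by (rule dirichlet_norm_translate_le[OF f(1) b])
  also have "\<dots> \<le> exp (- lam 0 * Re b)"
    using f(2) by (simp add: mult_left_le)
  finally show "x \<le> exp (- lam 0 * Re b)" .
qed

lemma comp_bounded_translation_Re_nonneg: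
  assumes bounded: "comp_bounded lam beta (\<lambda>z. z + b)"
    and lam_at_top: "filterlim lam at_top sequentially"
  shows "0 \<le> Re b"
proof (rule ccontr)
  assume "\<not> 0 \<le> Re b"
  obtain M where M: "\<And>f. f \<in> dirichlet_space lam beta \<Longrightarrow>
      dirichlet_norm lam beta (f \<circ> (\<lambda>z. z + b)) \<le> M * dirichlet_norm lam beta f"
    using bounded unfolding comp_bounded_def by blast
  have bound: "exp (- Re b * lam k) \<le> M" for k
  proof -
    have "(\<lambda>z. 1 * exp (- of_real (lam k) * z)) \<in> dirichlet_space lam beta"
      unfolding dirichlet_space_iff using expansion_monomial by blast
    from M[OF this] have "exp (- lam k * Re b) * beta k \<le> M * beta k"
      unfolding dirichlet_norm_translate_monomial dirichlet_norm_monomial by simp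
    then show ?thesis
      using beta_pos[of k] by (simp add: mult.commute)
  qed
  have "filterlim (\<lambda>k. - Re b * lam k) at_top sequentially"
    using \<open>\<not> 0 \<le> Re b\<close> by (intro filterlim_tendsto_pos_mult_at_top[OF tendsto_const _ lam_at_top]) simp
  then have "filterlim (\<lambda>k. exp (- Re b * lam k)) at_top sequentially"
    by (rule filterlim_compose[OF exp_at_top])
  then obtain k where "M < exp (- Re b * lam k)"
    by (auto simp: filterlim_at_top_dense eventually_sequentially)
  with bound[of k] show False
    by simp
qed

text \<open>Test C_phi on the reproducing kernel K_w at w = phi z, using (C_phi K_w)(z) = K_w(w) = ||K_w||^2.\<close>
lemma comp_bounded_kernel_sum_le:
  assumes "comp_bounded lam beta \<phi>"
  obtains M where "\<And>z. sqrt (kernel_sum (-2 * Re (\<phi> z))) \<le> M * sqrt (kernel_sum (-2 * Re z))"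
proof -
  obtain M where M: "\<And>f. f \<in> dirichlet_space lam beta \<Longrightarrow>
      dirichlet_norm lam beta (f \<circ> \<phi>) \<le> M * dirichlet_norm lam beta f"
    and closed: "\<And>f. f \<in> dirichlet_space lam beta \<Longrightarrow> f \<circ> \<phi> \<in> dirichlet_space lam beta"
    using assms unfolding comp_bounded_def by blast
  have "sqrt (kernel_sum (-2 * Re (\<phi> z))) \<le> M * sqrt (kernel_sum (-2 * Re z))" for z
  proof -
    define w where "w = \<phi> z"
    define A where "A = sqrt (kernel_sum (-2 * Re w))"
    define B where "B = sqrt (kernel_sum (-2 * Re z))"
    have A_pos: "0 < A" and B_pos: "0 < B"
      by (simp_all add: A_def B_def kernel_sum_pos)
    have K: "kernel w \<in> dirichlet_space lam beta"
      unfolding dirichlet_space_iff using expansion_kernel by blast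
    have "A * A = cmod ((kernel w \<circ> \<phi>) z)"
      using kernel_sum_pos[of "-2 * Re w"] by (simp add: A_def w_def kernel_diag)
    also have "\<dots> \<le> dirichlet_norm lam beta (kernel w \<circ> \<phi>) * B"
      unfolding B_def by (rule dirichlet_eval_le[OF closed[OF K]])
    also have "\<dots> \<le> M * A * B"
      using M[OF K] B_pos by (simp add: dirichlet_norm_kernel A_def mult_right_mono)
    finally have "A * A \<le> (M * B) * A"
      by (simp only: mult_ac)
    then have "A \<le> M * B"
      using A_pos by (simp only: mult_le_cancel_right_pos)
    then show ?thesis
      unfolding A_def B_def w_def .
  qed
  then show thesis
    by (rule that)
qed

lemma diff_le_of_kernel_sum_sqrt_le:
  assumes "sqrt (kernel_sum (-2 * u)) \<le> M * sqrt (kernel_sum (-2 * x))"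
  shows "x - u \<le> \<bar>ln M\<bar> / lam 0"
proof (cases "u \<le> x")
  case False
  moreover have "0 \<le> \<bar>ln M\<bar> / lam 0"
    using lam0_pos by simp
  ultimately show ?thesis
    by linarith
next
  case True
  define y where "y = lam 0 * (x - u)"
  have "exp (2 * y) * kernel_sum (-2 * x) \<le> kernel_sum (-2 * u)"
    using kernel_sum_shift[of "2 * (x - u)" "-2 * x"] True by (simp add: y_def algebra_simps)
  then have "exp y * sqrt (kernel_sum (-2 * x)) \<le> sqrt (kernel_sum (-2 * u))"
    by (metis real_sqrt_le_mono real_sqrt_mult exp_double real_sqrt_abs abs_exp_cancel)
  also have "\<dots> \<le> M * sqrt (kernel_sum (-2 * x))"
    by (rule assms)
  finally have "exp y \<le> M"
    using kernel_sum_pos[of "-2 * x"] by simp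
  moreover have "0 < M"
    using \<open>exp y \<le> M\<close> exp_gt_zero[of y] by linarith
  ultimately have "y \<le> ln M"
    by (simp add: ln_ge_iff)
  then show ?thesis
    using lam0_pos by (simp add: y_def pos_le_divide_eq mult.commute)
qed

lemma comp_bounded_Re_lower:
  assumes "comp_bounded lam beta \<phi>"
  obtains C where "\<And>z. C \<le> Re (\<phi> z - z)"
proof -
  obtain M where M: "\<And>z. sqrt (kernel_sum (-2 * Re (\<phi> z))) \<le> M * sqrt (kernel_sum (-2 * Re z))"
    using comp_bounded_kernel_sum_le[OF assms] by blast
  have "- (\<bar>ln M\<bar> / lam 0) \<le> Re (\<phi> z - z)" for z
    using diff_le_of_kernel_sum_sqrt_le[OF M[of z]] by simp
  then show thesis
    by (rule that)
qed

lemma comp_bounded_imp_translation: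
  assumes entire: "\<phi> holomorphic_on UNIV" and lam_inf: "filterlim lam at_top sequentially"
    and bounded: "comp_bounded lam beta \<phi>"
  shows "\<exists>b. 0 \<le> Re b \<and> \<phi> = (\<lambda>z. z + b)"
proof -
  obtain C where C: "\<And>z. C \<le> Re (\<phi> z - z)"
    using comp_bounded_Re_lower[OF bounded] by blast
  have "(\<lambda>z. \<phi> z - z) holomorphic_on UNIV"
    using entire by (intro holomorphic_intros)
  note shift = entire_Re_bounded_below_constant[OF this C]
  have \<phi>_eq: "\<phi> = (\<lambda>z. z + \<phi> 0)"
  proof
    show "\<phi> z = z + \<phi> 0" for z
      using shift[of z] by (simp add: diff_eq_eq add.commute)
  qed
  have "comp_bounded lam beta (\<lambda>z. z + \<phi> 0)"
    using bounded by (subst (asm) \<phi>_eq)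
  then have "0 \<le> Re (\<phi> 0)"
    using lam_inf by (rule comp_bounded_translation_Re_nonneg)
  with \<phi>_eq show ?thesis
    by blast
qed

end

theorem theorem4p5:
  fixes lam beta :: "nat \<Rightarrow> real" and \<phi> :: "complex \<Rightarrow> complex"
  assumes lam_nonneg: "0 \<le> lam 0"
    and lam_mono: "strict_mono lam"
    and lam_inf: "filterlim lam at_top sequentially"
    and lam_log: "limsup (\<lambda>n. ereal (ln (real (Suc n)) / lam n)) < \<infinity>"
    and beta_pos: "\<forall>n. 0 < beta n"
    and condE: "liminf (\<lambda>n. ereal (ln (beta n) / lam n)) = \<infinity>"
    and lam1_pos: "0 < lam 0"
    and entire: "\<phi> holomorphic_on UNIV"
  shows "(comp_bounded lam beta \<phi> \<longleftrightarrow> (\<exists>b. 0 \<le> Re b \<and> \<phi> = (\<lambda>z. z + b))) \<and>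
         (\<forall>b. 0 \<le> Re b \<and> \<phi> = (\<lambda>z. z + b) \<longrightarrow>
              comp_opnorm lam beta \<phi> = exp (- lam 0 * Re b))"
proof -
  have lam_pos: "0 < lam n" for n
    using lam1_pos strict_mono_less_eq[OF lam_mono, of 0 n] by linarith
  interpret dirichlet_space_setting lam beta
    using lam_mono lam1_pos beta_pos
      summable_exp_mult_lam_div_beta_sq[OF lam_pos _ lam_log condE]
    by unfold_locales auto
  have "\<exists>b. 0 \<le> Re b \<and> \<phi> = (\<lambda>z. z + b)" if "comp_bounded lam beta \<phi>"
    using comp_bounded_imp_translation[OF entire lam_inf that] .
  moreover have "comp_bounded lam beta \<phi> \<and> comp_opnorm lam beta \<phi> = exp (- lam 0 * Re b)"
    if "0 \<le> Re b" "\<phi> = (\<lambda>z. z + b)" for b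
    using that comp_bounded_translation comp_opnorm_translation by simp
  ultimately show ?thesis
    by blast
qed

end
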